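(* Let $G$ be a connected graph with vertices $v_1,\dots,v_n$ and let $\{v_i,v_j\}$ be a pair of vertices of order $h$, with associated vector $S=(s_1,\dots,s_n)^t$ (so $M(G)S=hE_{ij}$). Then $s_i=\min\{s_\ell:\ell=1,\dots,n\}$ and $s_j=\max\{s_\ell:\ell=1,\dots,n\}$.
   Context: Graphs are finite, connected, may have multiple edges, no loops. Let $c_{ij}$ ($i\neq j$) be the number of edges joining $v_i,v_j$, $c_{ii}=-\sum_{j\ne i}c_{ij}$, $M(G)=(c_{ij})$, and $E_{ij}=e_i-e_j\in\mathbb{Z}^n$. For an integer $h>0$, the pair $\{v_i,v_j\}$ has order $h$ if there exists $S=(s_1,\dots,s_n)^t\in\mathbb{Z}^n$ with $M(G)S=hE_{ij}$ and $\gcd(s_1-s_n,\dots,s_{n-1}-s_n)=1$; such an $S$ is the associated vector. *)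

theory Defs
  imports Main
begin

text \<open>A multigraph on vertices v_1..v_n is given by edge multiplicities
  c :: nat => nat => nat (c i j = number of edges joining v_i and v_j).\<close>

definition multigraph :: "nat \<Rightarrow> (nat \<Rightarrow> nat \<Rightarrow> nat) \<Rightarrow> bool" where
  "multigraph n c \<longleftrightarrow> (\<forall>i\<in>{1..n}. \<forall>j\<in>{1..n}. c i j = c j i) \<and> (\<forall>i\<in>{1..n}. c i i = 0)"

definition adj :: "nat \<Rightarrow> (nat \<Rightarrow> nat \<Rightarrow> nat) \<Rightarrow> nat \<Rightarrow> nat \<Rightarrow> bool" where
  "adj n c i j \<longleftrightarrow> i \<in> {1..n} \<and> j \<in> {1..n} \<and> c i j > 0"

definition graph_connected :: "nat \<Rightarrow> (nat \<Rightarrow> nat \<Rightarrow> nat) \<Rightarrow> bool" where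
  "graph_connected n c \<longleftrightarrow> (\<forall>i\<in>{1..n}. \<forall>j\<in>{1..n}. (adj n c)\<^sup>*\<^sup>* i j)"

definition Mmat :: "nat \<Rightarrow> (nat \<Rightarrow> nat \<Rightarrow> nat) \<Rightarrow> nat \<Rightarrow> nat \<Rightarrow> int" where
  "Mmat n c i j = (if i = j then - (\<Sum>k\<in>{1..n} - {i}. int (c i k)) else int (c i j))"

definition Evec :: "nat \<Rightarrow> nat \<Rightarrow> nat \<Rightarrow> int" where
  "Evec i j k = (if k = i then 1 else 0) - (if k = j then 1 else 0)"

definition assoc_vector :: "nat \<Rightarrow> (nat \<Rightarrow> nat \<Rightarrow> nat) \<Rightarrow> nat \<Rightarrow> nat \<Rightarrow> int \<Rightarrow> (nat \<Rightarrow> int) \<Rightarrow> bool" where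
  "assoc_vector n c i j h S \<longleftrightarrow> h > 0 \<and>
     (\<forall>k\<in>{1..n}. (\<Sum>l=1..n. Mmat n c k l * S l) = h * Evec i j k) \<and>
     Gcd ((\<lambda>k. S k - S n) ` {1..<n}) = 1"

definition pair_has_order :: "nat \<Rightarrow> (nat \<Rightarrow> nat \<Rightarrow> nat) \<Rightarrow> nat \<Rightarrow> nat \<Rightarrow> int \<Rightarrow> bool" where
  "pair_has_order n c i j h \<longleftrightarrow> (\<exists>S. assoc_vector n c i j h S)"

end

theory Submission
  imports Defs
begin

text \<open>Row k of M(G)S equals the sum of c_kl (s_l - s_k) over the neighbours l of v_k. Hence M(G)S
  is nonnegative at a vertex where S is minimal, and vanishes there only if all neighbours share
  the minimal value. As M(G)S \<le> 0 away from v_i, the set of minimisers of S is closed under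
  adjacency unless it contains v_i; by connectivity it must therefore contain v_i. The same
  argument for -S, which satisfies M(G)(-S) = h E_ji, shows that s_j is maximal.\<close>

definition Mmat_mulv :: "nat \<Rightarrow> (nat \<Rightarrow> nat \<Rightarrow> nat) \<Rightarrow> (nat \<Rightarrow> int) \<Rightarrow> nat \<Rightarrow> int" where
  "Mmat_mulv n c S k = (\<Sum>l=1..n. Mmat n c k l * S l)"

lemma Mmat_mulv_eq_sum_diff:
  assumes "k \<in> {1..n}"
  shows "Mmat_mulv n c S k = (\<Sum>l\<in>{1..n}-{k}. int (c k l) * (S l - S k))"
proof -
  have "Mmat_mulv n c S k = Mmat n c k k * S k + (\<Sum>l\<in>{1..n}-{k}. Mmat n c k l * S l)"
    using assms by (simp add: Mmat_mulv_def sum.remove)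
  also have "(\<Sum>l\<in>{1..n}-{k}. Mmat n c k l * S l) = (\<Sum>l\<in>{1..n}-{k}. int (c k l) * S l)"
    by (rule sum.cong) (auto simp: Mmat_def)
  also have "Mmat n c k k * S k = - (\<Sum>l\<in>{1..n}-{k}. int (c k l) * S k)"
    by (simp add: Mmat_def sum_distrib_right)
  finally show ?thesis by (simp add: sum_subtractf algebra_simps)
qed

lemma Mmat_mulv_uminus: "Mmat_mulv n c (\<lambda>l. - S l) k = - Mmat_mulv n c S k"
  by (simp add: Mmat_mulv_def sum_negf)

lemma adj_eq_at_minimum:
  assumes k: "k \<in> {1..n}" and min: "\<forall>l\<in>{1..n}. S k \<le> S l"
    and nonpos: "Mmat_mulv n c S k \<le> 0" and "adj n c k l"
  shows "S l = S k"
proof -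
  have l: "l \<in> {1..n}" "c k l > 0" using \<open>adj n c k l\<close> by (auto simp: adj_def)
  have nonneg: "\<forall>l\<in>{1..n}-{k}. 0 \<le> int (c k l) * (S l - S k)"
    using min by auto
  have "(\<Sum>l\<in>{1..n}-{k}. int (c k l) * (S l - S k)) \<le> 0"
    using nonpos Mmat_mulv_eq_sum_diff[OF k] by simp
  moreover have "0 \<le> (\<Sum>l\<in>{1..n}-{k}. int (c k l) * (S l - S k))"
    using nonneg by (intro sum_nonneg) blast
  ultimately have zero: "\<forall>l\<in>{1..n}-{k}. int (c k l) * (S l - S k) = 0"
    using nonneg sum_nonneg_eq_0_iff[of "{1..n}-{k}" "\<lambda>l. int (c k l) * (S l - S k)"] by simp
  show ?thesis
  proof (cases "l = k")
    case False
    then have "int (c k l) * (S l - S k) = 0" using zero l(1) by blast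
    then show ?thesis using l(2) by simp
  qed simp
qed

lemma Mmat_minimum_principle:
  assumes conn: "graph_connected n c" and i: "i \<in> {1..n}"
    and nonpos: "\<forall>k\<in>{1..n}-{i}. Mmat_mulv n c S k \<le> 0"
  shows "\<forall>k\<in>{1..n}. S i \<le> S k"
proof -
  have fin: "finite (S ` {1..n})" and ne: "S ` {1..n} \<noteq> {}" using i by auto
  obtain m where m: "m \<in> {1..n}" "S m = Min (S ` {1..n})"
    using Min_in[OF fin ne] by auto
  have m_min: "\<forall>k\<in>{1..n}. S m \<le> S k" using m fin by auto
  have "S i = S m"
  proof (rule ccontr)
    assume i_not_min: "S i \<noteq> S m"
    have "S b = S m" if "(adj n c)\<^sup>*\<^sup>* m b" for b
      using that
    proof (induction rule: rtranclp_induct)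
      case (step a b)
      have a: "a \<in> {1..n}" using step.hyps(2) by (simp add: adj_def)
      moreover have "a \<noteq> i" using step.IH i_not_min by auto
      ultimately have "Mmat_mulv n c S a \<le> 0" using nonpos by blast
      moreover have "\<forall>l\<in>{1..n}. S a \<le> S l" using m_min step.IH by simp
      ultimately have "S b = S a" using adj_eq_at_minimum a step.hyps(2) by blast
      then show ?case using step.IH by simp
    qed simp
    moreover have "(adj n c)\<^sup>*\<^sup>* m i"
      using conn m(1) i by (simp add: graph_connected_def)
    ultimately show False using i_not_min by blast
  qed
  then show ?thesis using m_min by simp
qed

theorem lemma1p1:
  fixes n :: nat and c :: "nat \<Rightarrow> nat \<Rightarrow> nat" and i j :: nat and h :: int
    and S :: "nat \<Rightarrow> int"
  assumes "multigraph n c" and "graph_connected n c"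
    and "i \<in> {1..n}" and "j \<in> {1..n}" and "i \<noteq> j"
    and "assoc_vector n c i j h S"
  shows "S i = Min (S ` {1..n}) \<and> S j = Max (S ` {1..n})"
proof -
  have h: "h > 0" and MS: "\<forall>k\<in>{1..n}. Mmat_mulv n c S k = h * Evec i j k"
    using assms(6) by (auto simp: assoc_vector_def Mmat_mulv_def)
  have "\<forall>k\<in>{1..n}. S i \<le> S k"
    using Mmat_minimum_principle[OF assms(2,3)] MS h by (simp add: Evec_def)
  moreover have "\<forall>k\<in>{1..n}. - S j \<le> - S k"
    using Mmat_minimum_principle[OF assms(2,4), of "\<lambda>l. - S l"] MS h
    by (simp add: Mmat_mulv_uminus Evec_def)
  ultimately show ?thesis
    using assms(3,4) by (auto intro!: Min_eqI[symmetric] Max_eqI[symmetric])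
qed

end
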